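(* For $\alpha>0$ let $\kappa(\alpha)=3\,\frac{2\alpha+1}{2\alpha+3}$ be the kurtosis of the Beta$(\alpha,\alpha)$ law. For $\alpha_1,\alpha_2>0$, $\kappa(\alpha_1)\le\kappa(\alpha_2)$ if and only if $F_{\alpha_1}\preceq_{\text{ssd}}F_{\alpha_2}$.
   Context: $F_\alpha$ denotes the distribution function of the symmetric Beta$(\alpha,\alpha)$ law on $[0,1]$. $F_1\preceq_{\text{ssd}}F_2$ means $\int_0^xF_2(t)dt\le\int_0^xF_1(t)dt$ for all $x\in[0,1]$. *)

theory Defs
  imports "HOL-Analysis.Analysis"
begin

definition beta_sym_density :: "real \<Rightarrow> real \<Rightarrow> real" where
  "beta_sym_density \<alpha> t =
     (if 0 \<le> t \<and> t \<le> 1 then t powr (\<alpha> - 1) * (1 - t) powr (\<alpha> - 1) / Beta \<alpha> \<alpha> else 0)"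

definition beta_sym_cdf :: "real \<Rightarrow> real \<Rightarrow> real" where
  "beta_sym_cdf \<alpha> x = integral {0..x} (beta_sym_density \<alpha>)"

definition beta_kurtosis :: "real \<Rightarrow> real" where
  "beta_kurtosis \<alpha> = 3 * (2 * \<alpha> + 1) / (2 * \<alpha> + 3)"

definition ssd_le :: "(real \<Rightarrow> real) \<Rightarrow> (real \<Rightarrow> real) \<Rightarrow> bool" where
  "ssd_le F1 F2 \<longleftrightarrow> (\<forall>x\<in>{0..1}. integral {0..x} F2 \<le> integral {0..x} F1)"

end

theory Submission
  imports Defs
begin

(* For a <= b the density of Beta(b,b) is the density of Beta(a,a) times a multiple of
   (t (1 - t)) powr (b - a), a likelihood ratio that increases on [0, 1/2]. Both laws give mass 1/2
   to [0, 1/2], so the monotone likelihood ratio argument yields F_b <= F_a there, strictly at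
   some point when a < b because the ratio tends to 0 at 0. The central symmetry
   F (1 - s) = 1 - F s gives integral {0..x} F = integral {0..1-x} F + x - 1/2, which carries the
   comparison of the integrated distribution functions from [0, 1/2] to all of [0, 1].
   The kurtosis, finally, is strictly increasing in the parameter. *)

lemma integral_reflect_shift_real:
  fixes h :: "real \<Rightarrow> real"
  shows "integral {a..b} (\<lambda>t. h (c - t)) = integral {c - b..c - a} h"
proof -
  have "integral {a..b} (\<lambda>t. h (c - t)) = integral {-b..-a} (\<lambda>y. h (y + c))"
    using Henstock_Kurzweil_Integration.integral_reflect_real[of "-a" "-b" "\<lambda>y. h (y + c)"]
    by (simp add: add.commute)
  also have "\<dots> = integral {(c - b) - c..(c - a) - c} (\<lambda>y. h (y + c))"
    by simp
  also have "\<dots> = integral {c - b..c - a} h"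
    by (rule integral_shift_real_ivl)
  finally show ?thesis .
qed

lemma integral_pos_if_continuous_nonneg:
  fixes f :: "real \<Rightarrow> real"
  assumes "continuous_on {a..b} f" "a < b" "\<And>t. t \<in> {a..b} \<Longrightarrow> 0 \<le> f t"
    and "x \<in> {a..b}" "f x \<noteq> 0"
  shows "0 < integral {a..b} f"
proof -
  have "0 \<le> integral {a..b} f"
    using assms by (intro integral_nonneg integrable_continuous_interval) auto
  moreover have "integral {a..b} f \<noteq> 0"
    using integral_eq_0_iff[OF assms(1-3)] assms(4,5) by blast
  ultimately show ?thesis by linarith
qed

lemma integral_le_ratio_mult_integral:
  fixes p q w :: "real \<Rightarrow> real"
  assumes "p integrable_on {a..x}" "q integrable_on {a..x}"
    and "\<And>t. t \<in> {a..x} \<Longrightarrow> 0 \<le> p t" "\<And>t. t \<in> {a..x} \<Longrightarrow> q t = w t * p t"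
    and "mono_on {a..x} w"
  shows "integral {a..x} q \<le> w x * integral {a..x} p"
proof -
  have "integral {a..x} q \<le> integral {a..x} (\<lambda>t. w x * p t)"
  proof (rule integral_le)
    fix t assume t: "t \<in> {a..x}"
    then have "w t \<le> w x"
      using assms(5) by (auto intro: mono_onD)
    then show "q t \<le> w x * p t"
      using t assms(3,4) by (simp add: mult_right_mono)
  qed (use assms(1,2) in \<open>auto intro: integrable_on_mult_right\<close>)
  then show ?thesis by simp
qed

lemma ratio_mult_integral_le_integral:
  fixes p q w :: "real \<Rightarrow> real"
  assumes "p integrable_on {x..b}" "q integrable_on {x..b}"
    and "\<And>t. t \<in> {x..b} \<Longrightarrow> 0 \<le> p t" "\<And>t. t \<in> {x..b} \<Longrightarrow> q t = w t * p t"
    and "mono_on {x..b} w"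
  shows "w x * integral {x..b} p \<le> integral {x..b} q"
proof -
  have "integral {x..b} (\<lambda>t. w x * p t) \<le> integral {x..b} q"
  proof (rule integral_le)
    fix t assume t: "t \<in> {x..b}"
    then have "w x \<le> w t"
      using assms(5) by (auto intro: mono_onD)
    then show "w x * p t \<le> q t"
      using t assms(3,4) by (simp add: mult_right_mono)
  qed (use assms(1,2) in \<open>auto intro: integrable_on_mult_right\<close>)
  then show ?thesis by simp
qed

lemma integral_le_if_increasing_ratio:
  fixes p q w :: "real \<Rightarrow> real"
  assumes p: "p integrable_on {a..b}" and q: "q integrable_on {a..b}"
    and p_nonneg: "\<And>t. t \<in> {a..b} \<Longrightarrow> 0 \<le> p t"
    and ratio: "\<And>t. t \<in> {a..b} \<Longrightarrow> q t = w t * p t"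
    and w: "mono_on {a..b} w"
    and mass: "integral {a..b} q = integral {a..b} p"
    and x: "x \<in> {a..b}"
  shows "integral {a..x} q \<le> integral {a..x} p"
proof -
  have sub: "{a..x} \<subseteq> {a..b}" "{x..b} \<subseteq> {a..b}"
    using x by auto
  have left: "integral {a..x} q \<le> w x * integral {a..x} p"
    using sub p q p_nonneg ratio mono_on_subset[OF w]
    by (intro integral_le_ratio_mult_integral) (auto intro: integrable_on_subinterval)
  have right: "w x * integral {x..b} p \<le> integral {x..b} q"
    using sub p q p_nonneg ratio mono_on_subset[OF w]
    by (intro ratio_mult_integral_le_integral) (auto intro: integrable_on_subinterval)
  have "integral {a..x} p + integral {x..b} p = integral {a..x} q + integral {x..b} q"
    using mass x Henstock_Kurzweil_Integration.integral_combine[OF _ _ p]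
      Henstock_Kurzweil_Integration.integral_combine[OF _ _ q] by simp
  moreover have "0 \<le> integral {a..x} p" "0 \<le> integral {x..b} p"
    using sub p p_nonneg by (auto intro!: integral_nonneg intro: integrable_on_subinterval)
  \<comment> \<open>If \<open>w x \<le> 1\<close> the left bound closes the argument, otherwise the right one does.\<close>
  moreover have "w x * integral {a..x} p \<le> integral {a..x} p" if "w x \<le> 1"
    using mult_right_mono[OF that \<open>0 \<le> integral {a..x} p\<close>] by simp
  moreover have "integral {x..b} p \<le> w x * integral {x..b} p" if "1 \<le> w x"
    using mult_right_mono[OF that \<open>0 \<le> integral {x..b} p\<close>] by simp
  ultimately show ?thesis
    using left right by linarith
qed

lemma integral_centrally_symmetric:
  fixes F :: "real \<Rightarrow> real"
  assumes F: "F integrable_on {0..1}"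
    and sym: "\<And>s. s \<in> {0..1} \<Longrightarrow> F (1 - s) = 1 - F s"
    and x: "x \<in> {0..1}"
  shows "integral {0..x} F = integral {0..1 - x} F + x - 1/2"
proof -
  have head: "integral {0..y} F = integral {0..1} F - (1 - y) + integral {0..1 - y} F"
    if y: "y \<in> {0..1}" for y
  proof -
    have F_sub: "F integrable_on {0..1 - y}"
      using y by (intro integrable_on_subinterval[OF F]) auto
    have "integral {y..1} F = integral {0..1 - y} (\<lambda>s. F (1 - s))"
      using integral_reflect_shift_real[of 0 "1 - y" F 1] by simp
    also have "\<dots> = integral {0..1 - y} (\<lambda>s. 1 - F s)"
      using y by (intro integral_cong sym) auto
    also have "\<dots> = (1 - y) - integral {0..1 - y} F"
      using y F_sub by (subst integral_diff) auto
    finally have "integral {y..1} F = (1 - y) - integral {0..1 - y} F" .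
    moreover have "integral {0..y} F + integral {y..1} F = integral {0..1} F"
      using y by (intro Henstock_Kurzweil_Integration.integral_combine F) auto
    ultimately show ?thesis by linarith
  qed
  have "integral {0..1} F = 1/2"
    using head[of "1/2"] by simp
  then show ?thesis
    using head[OF x] by simp
qed

lemma Beta_real_pos: "0 < a \<Longrightarrow> 0 < b \<Longrightarrow> 0 < Beta a (b::real)"
  unfolding Beta_def by (intro divide_pos_pos mult_pos_pos Gamma_real_pos) auto

lemma beta_sym_density_nonneg: "0 < \<alpha> \<Longrightarrow> 0 \<le> beta_sym_density \<alpha> t"
  unfolding beta_sym_density_def using Beta_real_pos[of \<alpha> \<alpha>] by simp

lemma beta_sym_density_pos: "0 < \<alpha> \<Longrightarrow> t \<in> {0<..<1} \<Longrightarrow> 0 < beta_sym_density \<alpha> t"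
  unfolding beta_sym_density_def using Beta_real_pos[of \<alpha> \<alpha>] by simp

lemma beta_sym_density_reflect: "beta_sym_density \<alpha> (1 - t) = beta_sym_density \<alpha> t"
  unfolding beta_sym_density_def by (auto simp: mult.commute)

lemma beta_sym_density_has_integral:
  "0 < \<alpha> \<Longrightarrow> (beta_sym_density \<alpha> has_integral 1) {0..1}"
proof -
  assume \<alpha>: "0 < \<alpha>"
  have "((\<lambda>t. t powr (\<alpha> - 1) * (1 - t) powr (\<alpha> - 1) / Beta \<alpha> \<alpha>) has_integral
          Beta \<alpha> \<alpha> / Beta \<alpha> \<alpha>) {0..1}"
    by (intro has_integral_divide has_integral_Beta_real \<alpha>)
  then have "((\<lambda>t. t powr (\<alpha> - 1) * (1 - t) powr (\<alpha> - 1) / Beta \<alpha> \<alpha>) has_integral 1) {0..1}"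
    using Beta_real_pos[OF \<alpha> \<alpha>] by simp
  then show ?thesis
    by (rule has_integral_eq[rotated]) (simp add: beta_sym_density_def)
qed

lemma beta_sym_density_integrable_on:
  "0 < \<alpha> \<Longrightarrow> 0 \<le> u \<Longrightarrow> v \<le> 1 \<Longrightarrow> beta_sym_density \<alpha> integrable_on {u..v}"
  by (rule integrable_on_subinterval[OF has_integral_integrable[OF beta_sym_density_has_integral]])
    auto

lemma beta_sym_density_continuous_on:
  "0 < \<alpha> \<Longrightarrow> 0 < u \<Longrightarrow> v < 1 \<Longrightarrow> continuous_on {u..v} (beta_sym_density \<alpha>)"
  unfolding beta_sym_density_def
  by (rule continuous_on_eq[of _ "\<lambda>t. t powr (\<alpha> - 1) * (1 - t) powr (\<alpha> - 1) / Beta \<alpha> \<alpha>"])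
    (auto intro!: continuous_intros simp: Beta_real_pos[THEN less_imp_neq, symmetric])

lemma beta_sym_cdf_one: "0 < \<alpha> \<Longrightarrow> beta_sym_cdf \<alpha> 1 = 1"
  unfolding beta_sym_cdf_def using beta_sym_density_has_integral by (rule integral_unique)

lemma beta_sym_cdf_reflect:
  assumes \<alpha>: "0 < \<alpha>" and x: "x \<in> {0..1}"
  shows "beta_sym_cdf \<alpha> (1 - x) = 1 - beta_sym_cdf \<alpha> x"
proof -
  have "beta_sym_cdf \<alpha> (1 - x) = integral {x..1} (\<lambda>t. beta_sym_density \<alpha> (1 - t))"
    unfolding beta_sym_cdf_def using integral_reflect_shift_real[of x 1 _ 1] by simp
  also have "\<dots> = integral {x..1} (beta_sym_density \<alpha>)"
    by (simp add: beta_sym_density_reflect)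
  also have "\<dots> = 1 - beta_sym_cdf \<alpha> x"
    using Henstock_Kurzweil_Integration.integral_combine[of 0 x 1, OF _ _ beta_sym_density_integrable_on]
      beta_sym_cdf_one x \<alpha>
    unfolding beta_sym_cdf_def by fastforce
  finally show ?thesis .
qed

lemma beta_sym_cdf_half: "0 < \<alpha> \<Longrightarrow> beta_sym_cdf \<alpha> (1/2) = 1/2"
  using beta_sym_cdf_reflect[of \<alpha> "1/2"] by simp

lemma beta_sym_cdf_continuous_on: "0 < \<alpha> \<Longrightarrow> continuous_on {0..1} (beta_sym_cdf \<alpha>)"
  unfolding beta_sym_cdf_def
  by (intro indefinite_integral_continuous_1 beta_sym_density_integrable_on) auto

lemma beta_sym_cdf_integrable_on:
  "0 < \<alpha> \<Longrightarrow> 0 \<le> u \<Longrightarrow> v \<le> 1 \<Longrightarrow> beta_sym_cdf \<alpha> integrable_on {u..v}"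
  by (rule integrable_on_subinterval[OF integrable_continuous_interval[OF beta_sym_cdf_continuous_on]])
    auto

lemma beta_sym_cdf_pos:
  assumes \<alpha>: "0 < \<alpha>" and x: "x \<in> {0<..<1}"
  shows "0 < beta_sym_cdf \<alpha> x"
proof -
  \<comment> \<open>For \<open>\<alpha> < 1\<close> the density is unbounded near 0, so positivity is read off on \<open>[x/2, x]\<close>.\<close>
  have "0 < integral {x/2..x} (beta_sym_density \<alpha>)"
    using x beta_sym_density_pos[OF \<alpha>, of x]
    by (intro integral_pos_if_continuous_nonneg[where x = x] beta_sym_density_continuous_on
        beta_sym_density_nonneg \<alpha>) auto
  moreover have "0 \<le> integral {0..x/2} (beta_sym_density \<alpha>)"
    using x by (intro integral_nonneg beta_sym_density_integrable_on beta_sym_density_nonneg \<alpha>) auto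
  moreover have "integral {0..x/2} (beta_sym_density \<alpha>) + integral {x/2..x} (beta_sym_density \<alpha>)
      = beta_sym_cdf \<alpha> x"
    unfolding beta_sym_cdf_def using x
    by (intro Henstock_Kurzweil_Integration.integral_combine beta_sym_density_integrable_on \<alpha>) auto
  ultimately show ?thesis by linarith
qed

definition beta_sym_likelihood_ratio :: "real \<Rightarrow> real \<Rightarrow> real \<Rightarrow> real" where
  "beta_sym_likelihood_ratio \<alpha> \<beta> t = (t * (1 - t)) powr (\<beta> - \<alpha>) * Beta \<alpha> \<alpha> / Beta \<beta> \<beta>"

lemma beta_sym_density_ratio:
  assumes "0 < \<alpha>"
  shows "beta_sym_density \<beta> t = beta_sym_likelihood_ratio \<alpha> \<beta> t * beta_sym_density \<alpha> t"
proof (cases "t \<in> {0<..<1}")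
  case True
  have "s powr (\<beta> - 1) = s powr (\<beta> - \<alpha>) * s powr (\<alpha> - 1)" if "0 < s" for s :: real
    using that by (simp add: powr_add[symmetric])
  then have "t powr (\<beta> - 1) * (1 - t) powr (\<beta> - 1) =
      (t * (1 - t)) powr (\<beta> - \<alpha>) * (t powr (\<alpha> - 1) * (1 - t) powr (\<alpha> - 1))"
    using True by (simp add: powr_mult ac_simps)
  then show ?thesis
    using True Beta_real_pos[OF assms assms]
    by (simp add: beta_sym_density_def beta_sym_likelihood_ratio_def)
next
  case False
  then have "t \<le> 0 \<or> 1 \<le> t" by auto
  then show ?thesis
    by (auto simp: beta_sym_density_def)
qed

lemma beta_sym_likelihood_ratio_mono_on:
  assumes "0 < \<alpha>" "\<alpha> \<le> \<beta>"
  shows "mono_on {0..1/2} (beta_sym_likelihood_ratio \<alpha> \<beta>)"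
proof (rule mono_onI)
  fix s t :: real assume "s \<in> {0..1/2}" "t \<in> {0..1/2}" "s \<le> t"
  then have "0 \<le> s * (1 - s)" "0 \<le> (t - s) * (1 - s - t)"
    by (auto intro!: mult_nonneg_nonneg)
  then have "0 \<le> s * (1 - s)" "s * (1 - s) \<le> t * (1 - t)"
    by (auto simp: algebra_simps)
  then show "beta_sym_likelihood_ratio \<alpha> \<beta> s \<le> beta_sym_likelihood_ratio \<alpha> \<beta> t"
    unfolding beta_sym_likelihood_ratio_def using assms Beta_real_pos[of \<alpha> \<alpha>] Beta_real_pos[of \<beta> \<beta>]
    by (intro divide_right_mono mult_right_mono powr_mono2) auto
qed

lemma beta_sym_likelihood_ratio_tendsto_0:
  assumes "\<alpha> < \<beta>"
  shows "(beta_sym_likelihood_ratio \<alpha> \<beta> \<longlongrightarrow> 0) (at_right 0)"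
proof -
  have "((\<lambda>t::real. t * (1 - t)) \<longlongrightarrow> 0) (at_right 0)"
    by (auto intro!: tendsto_eq_intros)
  moreover have "\<forall>\<^sub>F t in at_right 0. 0 \<le> t * (1 - t::real)"
    unfolding eventually_at_right_field by (auto intro!: exI[of _ 1])
  ultimately have "((\<lambda>t. (t * (1 - t)) powr (\<beta> - \<alpha>)) \<longlongrightarrow> 0) (at_right 0)"
    using assms by (intro tendsto_zero_powrI tendsto_const) auto
  from tendsto_mult_left_zero[OF this] show ?thesis
    unfolding beta_sym_likelihood_ratio_def by (rule tendsto_divide_zero)
qed

lemma beta_sym_cdf_le_if_le:
  assumes \<alpha>: "0 < \<alpha>" and \<alpha>\<beta>: "\<alpha> \<le> \<beta>" and x: "x \<in> {0..1/2}"
  shows "beta_sym_cdf \<beta> x \<le> beta_sym_cdf \<alpha> x"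
proof -
  have \<beta>: "0 < \<beta>" using \<alpha> \<alpha>\<beta> by simp
  have "integral {0..1/2} (beta_sym_density \<beta>) = integral {0..1/2} (beta_sym_density \<alpha>)"
    using beta_sym_cdf_half[OF \<alpha>] beta_sym_cdf_half[OF \<beta>] unfolding beta_sym_cdf_def by simp
  then show ?thesis
    unfolding beta_sym_cdf_def using x beta_sym_likelihood_ratio_mono_on[OF \<alpha> \<alpha>\<beta>]
    by (intro integral_le_if_increasing_ratio[where w = "beta_sym_likelihood_ratio \<alpha> \<beta>"]
        beta_sym_density_integrable_on beta_sym_density_nonneg beta_sym_density_ratio
        \<alpha> \<beta>) auto
qed

lemma beta_sym_cdf_less_if_less:
  assumes \<alpha>: "0 < \<alpha>" and \<alpha>\<beta>: "\<alpha> < \<beta>"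
  obtains x where "x \<in> {0<..<1/2}" "beta_sym_cdf \<beta> x < beta_sym_cdf \<alpha> x"
proof -
  have \<beta>: "0 < \<beta>" using \<alpha> \<alpha>\<beta> by simp
  have "\<forall>\<^sub>F y in at_right 0. beta_sym_likelihood_ratio \<alpha> \<beta> y < 1"
    using beta_sym_likelihood_ratio_tendsto_0[OF \<alpha>\<beta>] by (rule order_tendstoD) simp
  then obtain b where
    b: "0 < b" "\<And>y. 0 < y \<Longrightarrow> y < b \<Longrightarrow> beta_sym_likelihood_ratio \<alpha> \<beta> y < 1"
    unfolding eventually_at_right_field by blast
  define y where "y = min b (1/2) / 2"
  have y: "y \<in> {0<..<1/2}" "beta_sym_likelihood_ratio \<alpha> \<beta> y < 1"
    unfolding y_def using b by auto
  have "beta_sym_cdf \<beta> y \<le> beta_sym_likelihood_ratio \<alpha> \<beta> y * beta_sym_cdf \<alpha> y"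
    unfolding beta_sym_cdf_def using y \<alpha>\<beta>
    by (intro integral_le_ratio_mult_integral beta_sym_density_integrable_on beta_sym_density_nonneg
        beta_sym_density_ratio \<alpha> \<beta> mono_on_subset[OF beta_sym_likelihood_ratio_mono_on]) auto
  also have "\<dots> < beta_sym_cdf \<alpha> y"
    using y beta_sym_cdf_pos[OF \<alpha>, of y] by simp
  finally show ?thesis
    using that y(1) by blast
qed

lemma beta_sym_ssd_if_le:
  assumes \<alpha>: "0 < \<alpha>" and \<alpha>\<beta>: "\<alpha> \<le> \<beta>"
  shows "ssd_le (beta_sym_cdf \<alpha>) (beta_sym_cdf \<beta>)"
  unfolding ssd_le_def
proof
  fix x :: real assume x: "x \<in> {0..1}"
  have \<beta>: "0 < \<beta>" using \<alpha> \<alpha>\<beta> by simp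
  have lower_half: "integral {0..y} (beta_sym_cdf \<beta>) \<le> integral {0..y} (beta_sym_cdf \<alpha>)"
    if "y \<in> {0..1/2}" for y
    using that
    by (intro integral_le beta_sym_cdf_integrable_on beta_sym_cdf_le_if_le \<alpha> \<beta> \<alpha>\<beta>) auto
  have reflect: "integral {0..x} (beta_sym_cdf \<gamma>) = integral {0..1 - x} (beta_sym_cdf \<gamma>) + x - 1/2"
    if "0 < \<gamma>" for \<gamma>
    using x that
    by (intro integral_centrally_symmetric beta_sym_cdf_integrable_on beta_sym_cdf_reflect) auto
  show "integral {0..x} (beta_sym_cdf \<beta>) \<le> integral {0..x} (beta_sym_cdf \<alpha>)"
  proof (cases "x \<le> 1/2")
    case True
    then show ?thesis using x lower_half by simp
  next
    case False
    then show ?thesis using x lower_half[of "1 - x"] reflect[OF \<alpha>] reflect[OF \<beta>] by simp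
  qed
qed

lemma le_if_beta_sym_ssd:
  assumes \<alpha>: "0 < \<alpha>" and \<beta>: "0 < \<beta>" and ssd: "ssd_le (beta_sym_cdf \<alpha>) (beta_sym_cdf \<beta>)"
  shows "\<alpha> \<le> \<beta>"
proof (rule ccontr)
  assume "\<not> \<alpha> \<le> \<beta>"
  then have \<beta>\<alpha>: "\<beta> < \<alpha>" by simp
  obtain x where x: "x \<in> {0<..<1/2}" "beta_sym_cdf \<alpha> x < beta_sym_cdf \<beta> x"
    using beta_sym_cdf_less_if_less[OF \<beta> \<beta>\<alpha>] .
  define D where "D t = beta_sym_cdf \<beta> t - beta_sym_cdf \<alpha> t" for t
  have "0 < integral {0..1/2} D"
    using x beta_sym_cdf_le_if_le[OF \<beta> less_imp_le[OF \<beta>\<alpha>]] unfolding D_def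
    by (intro integral_pos_if_continuous_nonneg[where x = x] continuous_intros
        continuous_on_subset[OF beta_sym_cdf_continuous_on] \<alpha> \<beta>) auto
  moreover have "integral {0..1/2} D = integral {0..1/2} (beta_sym_cdf \<beta>) - integral {0..1/2} (beta_sym_cdf \<alpha>)"
    unfolding D_def by (intro integral_diff beta_sym_cdf_integrable_on \<alpha> \<beta>) auto
  moreover have "integral {0..1/2} (beta_sym_cdf \<beta>) \<le> integral {0..1/2} (beta_sym_cdf \<alpha>)"
    using ssd unfolding ssd_le_def by simp
  ultimately show False
    by linarith
qed

lemma beta_kurtosis_le_iff:
  "0 < \<alpha> \<Longrightarrow> 0 < \<beta> \<Longrightarrow> beta_kurtosis \<alpha> \<le> beta_kurtosis \<beta> \<longleftrightarrow> \<alpha> \<le> \<beta>"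
  unfolding beta_kurtosis_def by (simp add: field_simps)

theorem corollary4:
  fixes \<alpha>1 \<alpha>2 :: real
  assumes "\<alpha>1 > 0" and "\<alpha>2 > 0"
  shows "beta_kurtosis \<alpha>1 \<le> beta_kurtosis \<alpha>2 \<longleftrightarrow>
         ssd_le (beta_sym_cdf \<alpha>1) (beta_sym_cdf \<alpha>2)"
  using beta_kurtosis_le_iff[OF assms] beta_sym_ssd_if_le[OF assms(1)] le_if_beta_sym_ssd[OF assms]
  by blast

end
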